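(* Every $SC^*$-compact Hausdorff space is an $SC^*$-$T_3$ space, and consequently an $SC^*$-regular space.
   Context: For $A\subseteq X$ in a topological space $X$: $A$ is semi-open if $A\subseteq cl(int(A))$, semi-closed if its complement is semi-open; $scl(A)$ is the smallest semi-closed set containing $A$. $A$ is $c^*$-open if $int(cl(A))\subseteq A\subseteq cl(int(A))$. $A$ is $SC^*$-closed if $scl(A)\subseteq U$ whenever $A\subseteq U$ and $U$ is $c^*$-open; $A$ is $SC^*$-open if $X\setminus A$ is $SC^*$-closed. $X$ is $SC^*$-compact if every cover of $X$ by $SC^*$-open sets has a finite subcover. $X$ is $SC^*$-regular if for every closed set $F$ and every point $x\notin F$ there exist disjoint $SC^*$-open sets $U,V$ with $F\subseteq U$ and $x\in V$. $X$ is $SC^*$-$T_1$ if for any distinct $x,y$ there are $SC^*$-open sets $U,V$ with $x\in U$, $y\notin U$, $y\in V$, $x\notin V$; $X$ is $SC^*$-$T_3$ if it is both $SC^*$-regular and $SC^*$-$T_1$. *)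

theory Defs
  imports "HOL-Analysis.Analysis"
begin

definition semi_open :: "'a topology \<Rightarrow> 'a set \<Rightarrow> bool" where
  "semi_open X A \<longleftrightarrow> A \<subseteq> topspace X \<and> A \<subseteq> X closure_of (X interior_of A)"

definition semi_closed :: "'a topology \<Rightarrow> 'a set \<Rightarrow> bool" where
  "semi_closed X A \<longleftrightarrow> A \<subseteq> topspace X \<and> semi_open X (topspace X - A)"

definition scl :: "'a topology \<Rightarrow> 'a set \<Rightarrow> 'a set" where
  "scl X A = topspace X \<inter> \<Inter> {F. semi_closed X F \<and> A \<subseteq> F}"

definition cstar_open :: "'a topology \<Rightarrow> 'a set \<Rightarrow> bool" where
  "cstar_open X A \<longleftrightarrow> A \<subseteq> topspace X \<and>
     X interior_of (X closure_of A) \<subseteq> A \<and> A \<subseteq> X closure_of (X interior_of A)"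

definition SCstar_closed :: "'a topology \<Rightarrow> 'a set \<Rightarrow> bool" where
  "SCstar_closed X A \<longleftrightarrow> A \<subseteq> topspace X \<and>
     (\<forall>U. A \<subseteq> U \<and> cstar_open X U \<longrightarrow> scl X A \<subseteq> U)"

definition SCstar_open :: "'a topology \<Rightarrow> 'a set \<Rightarrow> bool" where
  "SCstar_open X A \<longleftrightarrow> A \<subseteq> topspace X \<and> SCstar_closed X (topspace X - A)"

definition SCstar_compact :: "'a topology \<Rightarrow> bool" where
  "SCstar_compact X \<longleftrightarrow>
     (\<forall>\<U>. (\<forall>U\<in>\<U>. SCstar_open X U) \<and> topspace X \<subseteq> \<Union>\<U> \<longrightarrow>
        (\<exists>\<F>. finite \<F> \<and> \<F> \<subseteq> \<U> \<and> topspace X \<subseteq> \<Union>\<F>))"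

definition SCstar_regular :: "'a topology \<Rightarrow> bool" where
  "SCstar_regular X \<longleftrightarrow>
     (\<forall>F x. closedin X F \<and> x \<in> topspace X \<and> x \<notin> F \<longrightarrow>
        (\<exists>U V. SCstar_open X U \<and> SCstar_open X V \<and> F \<subseteq> U \<and> x \<in> V \<and> U \<inter> V = {}))"

definition SCstar_T1 :: "'a topology \<Rightarrow> bool" where
  "SCstar_T1 X \<longleftrightarrow>
     (\<forall>x\<in>topspace X. \<forall>y\<in>topspace X. x \<noteq> y \<longrightarrow>
        (\<exists>U V. SCstar_open X U \<and> SCstar_open X V \<and>
           x \<in> U \<and> y \<notin> U \<and> y \<in> V \<and> x \<notin> V))"

definition SCstar_T3 :: "'a topology \<Rightarrow> bool" where
  "SCstar_T3 X \<longleftrightarrow> SCstar_regular X \<and> SCstar_T1 X"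

end

theory Submission
  imports Defs
begin

text \<open>A closed set is semi-closed, hence equal to its own semi-closure, so it is
  SC*-closed; dually every open set is SC*-open. Consequently SC*-compactness implies
  compactness, and a compact Hausdorff space is regular and T1. The open sets that
  witness regularity and the T1 property are then SC*-open witnesses.\<close>

lemma openin_imp_semi_open: "openin X U \<Longrightarrow> semi_open X U"
  unfolding semi_open_def
  by (simp add: closure_of_subset interior_of_openin openin_subset)

lemma closedin_imp_semi_closed: "closedin X F \<Longrightarrow> semi_closed X F"
  unfolding semi_closed_def
  by (simp add: closedin_def openin_imp_semi_open)

lemma scl_subset_closedin: "closedin X F \<Longrightarrow> scl X F \<subseteq> F"
  unfolding scl_def using closedin_imp_semi_closed by blast

lemma closedin_imp_SCstar_closed: "closedin X F \<Longrightarrow> SCstar_closed X F"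
  unfolding SCstar_closed_def using scl_subset_closedin closedin_subset by blast

lemma openin_imp_SCstar_open: "openin X U \<Longrightarrow> SCstar_open X U"
  unfolding SCstar_open_def
  by (simp add: closedin_imp_SCstar_closed openin_closedin_eq)

lemma SCstar_compact_imp_compact_space: "SCstar_compact X \<Longrightarrow> compact_space X"
  unfolding compact_space_alt SCstar_compact_def
  by (meson openin_imp_SCstar_open)

lemma regular_space_imp_SCstar_regular:
  assumes "regular_space X"
  shows "SCstar_regular X"
  unfolding SCstar_regular_def
proof (intro allI impI)
  fix F x
  assume "closedin X F \<and> x \<in> topspace X \<and> x \<notin> F"
  then obtain U V where "openin X U" "openin X V" "x \<in> U" "F \<subseteq> V" "disjnt U V"
    using assms unfolding regular_space_def by (meson Diff_iff)
  then show "\<exists>U V. SCstar_open X U \<and> SCstar_open X V \<and> F \<subseteq> U \<and> x \<in> V \<and> U \<inter> V = {}"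
    by (metis disjnt_def inf_commute openin_imp_SCstar_open)
qed

lemma t1_space_imp_SCstar_T1:
  assumes "t1_space X"
  shows "SCstar_T1 X"
  unfolding SCstar_T1_def
proof (intro ballI impI)
  fix x y
  assume "x \<in> topspace X" "y \<in> topspace X" "x \<noteq> y"
  with assms obtain U V where "openin X U" "x \<in> U" "y \<notin> U" "openin X V" "y \<in> V" "x \<notin> V"
    unfolding t1_space_def by metis
  then show "\<exists>U V. SCstar_open X U \<and> SCstar_open X V \<and> x \<in> U \<and> y \<notin> U \<and> y \<in> V \<and> x \<notin> V"
    using openin_imp_SCstar_open by blast
qed

theorem theorem2p15:
  fixes X :: "'a topology"
  assumes "SCstar_compact X" and "Hausdorff_space X"
  shows "SCstar_T3 X \<and> SCstar_regular X"
proof -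
  have "regular_space X"
    using compact_Hausdorff_imp_regular_space SCstar_compact_imp_compact_space assms by blast
  then have "SCstar_regular X"
    by (rule regular_space_imp_SCstar_regular)
  moreover have "SCstar_T1 X"
    using assms(2) Hausdorff_imp_t1_space t1_space_imp_SCstar_T1 by blast
  ultimately show ?thesis
    unfolding SCstar_T3_def by simp
qed

end
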